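(* Let $N\in\{2,3\}$. If $z\in C^2(\mathbb{R})$ satisfies $$-z''(t)+(N-4)z'(t)+(2N-4)z(t)=\frac{N-1}{2}\,z(t)^2\qquad (t\in\mathbb{R})$$ and $\lim_{t\to-\infty}e^tz(t)=0=\lim_{t\to+\infty}e^tz(t)$, then $z\equiv0$. *)

theory Defs
  imports "HOL-Analysis.Analysis"
begin

end

theory Submission
  imports Defs "HOL-Real_Asymp.Real_Asymp"
begin

(* For N = 2 the equation reads z'' = -2 z' - z^2/2, so the first integral G = z' + 2 z is
   nonincreasing. If G were negative somewhere, the bound (e^(2t) z)' = e^(2t) G <= -delta e^(2t)
   would push e^t z to -infinity at +infinity. If G were positive somewhere, comparing e^(2t) z with
   its limit 0 at -infinity gives z >= G/2, so G' <= -G^2/8, a Riccati inequality without positive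
   solutions on a left half-line. Hence G = 0 and z^2 = -2 G' = 0.

   For N = 3, z'' = -z' + 2 z - z^2, the same linear argument applied to the nonincreasing
   quantities e^(-t) (z' + 2 z) and e^(2t) (z' - z) gives -2 z <= z' <= z; so z >= 0 and z, z' tend
   to 0 at +infinity. The energy E = z'^2/2 - z^2 + z^3/3 is then nonincreasing with limit 0, so
   E >= 0. If E(t0) > 0, then ln z + z'/z decreases at a positive rate left of t0, so z tends to
   infinity at -infinity, and once z >= 6 the rate is at least 2; thus z >= c e^(-2t), contradicting
   e^t z -> 0 at -infinity. So E = 0, which forces z' = 0, and z is a constant with limit 0. *)

lemma DERIV_le_imp_increment_le:
  fixes f g f' g' :: "real \<Rightarrow> real"
  assumes "a \<le> b"
    and f: "\<And>x. a \<le> x \<Longrightarrow> x \<le> b \<Longrightarrow> (f has_real_derivative f' x) (at x)"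
    and g: "\<And>x. a \<le> x \<Longrightarrow> x \<le> b \<Longrightarrow> (g has_real_derivative g' x) (at x)"
    and le: "\<And>x. a \<le> x \<Longrightarrow> x \<le> b \<Longrightarrow> f' x \<le> g' x"
  shows "f b - f a \<le> g b - g a"
proof -
  have "(\<lambda>x. f x - g x) b \<le> (\<lambda>x. f x - g x) a"
  proof (rule DERIV_nonpos_imp_nonincreasing[OF \<open>a \<le> b\<close>])
    fix x assume "a \<le> x" "x \<le> b"
    then show "\<exists>y. ((\<lambda>x. f x - g x) has_real_derivative y) (at x) \<and> y \<le> 0"
      using f g le by (intro exI[of _ "f' x - g' x"]) (auto intro: DERIV_diff)
  qed
  then show ?thesis by simp
qed

lemma filterlim_exp_mult_at_bot_if_linear_DERIV_le:
  fixes z z' :: "real \<Rightarrow> real" and a b c \<delta> T :: real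
  assumes deriv: "\<And>t. T \<le> t \<Longrightarrow> (z has_real_derivative z' t) (at t)"
    and ineq: "\<And>t. T \<le> t \<Longrightarrow> z' t + c * z t \<le> - \<delta> * exp (b * t)"
    and "\<delta> > 0" and "b + c > 0" and "a + b > 0"
  shows "filterlim (\<lambda>t. exp (a * t) * z t) at_bot at_top"
proof -
  define u where "u t = exp (c * t) * z t" for t
  define v where "v t = - \<delta> / (b + c) * exp ((b + c) * t)" for t
  define A where "A = u T - v T"
  have bound: "exp (a * t) * z t \<le> exp ((a + b) * t) * (A * exp (- (b + c) * t) - \<delta> / (b + c))"
    if "T \<le> t" for t
  proof -
    have "u t - u T \<le> v t - v T"
    proof (rule DERIV_le_imp_increment_le[OF that])
      fix x assume "T \<le> x"
      show "(u has_real_derivative exp (c * x) * (z' x + c * z x)) (at x)"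
        unfolding u_def using deriv[OF \<open>T \<le> x\<close>]
        by (auto intro!: derivative_eq_intros simp: algebra_simps)
      show "(v has_real_derivative - \<delta> * exp ((b + c) * x)) (at x)"
        unfolding v_def using \<open>b + c > 0\<close> by (auto intro!: derivative_eq_intros)
      show "exp (c * x) * (z' x + c * z x) \<le> - \<delta> * exp ((b + c) * x)"
        using mult_left_mono[OF ineq[OF \<open>T \<le> x\<close>], of "exp (c * x)"]
        by (simp only: distrib_right exp_add) (simp add: mult_ac)
    qed
    then have "exp ((a - c) * t) * u t \<le> exp ((a - c) * t) * (A + v t)"
      by (simp add: A_def)
    moreover have "exp ((a - c) * t) * u t = exp (a * t) * z t"
      by (simp add: u_def mult.assoc[symmetric] exp_add[symmetric] algebra_simps)
    moreover have "exp ((a - c) * t) * (A + v t)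
        = exp ((a + b) * t) * (A * exp (- (b + c) * t) - \<delta> / (b + c))"
      by (simp add: v_def algebra_simps exp_add[symmetric])
    ultimately show ?thesis by simp
  qed
  have "filterlim (\<lambda>t. (A * exp (- (b + c) * t) - \<delta> / (b + c)) * exp ((a + b) * t)) at_bot at_top"
  proof (rule filterlim_tendsto_neg_mult_at_bot)
    show "((\<lambda>t. A * exp (- (b + c) * t) - \<delta> / (b + c)) \<longlongrightarrow> 0 - \<delta> / (b + c)) at_top"
      using \<open>b + c > 0\<close> by real_asymp
    show "0 - \<delta> / (b + c) < 0" using \<open>\<delta> > 0\<close> \<open>b + c > 0\<close> by simp
    show "filterlim (\<lambda>t. exp ((a + b) * t)) at_top at_top"
      using \<open>a + b > 0\<close> by real_asymp
  qed
  then show ?thesis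
    by (rule filterlim_at_bot_mono)
      (use bound in \<open>auto simp: mult.commute intro: eventually_at_top_linorderI[of T]\<close>)
qed

lemma filterlim_exp_mult_at_bot_at_bot_if_linear_DERIV_ge:
  fixes z z' :: "real \<Rightarrow> real" and a b c \<delta> T :: real
  assumes deriv: "\<And>t. t \<le> T \<Longrightarrow> (z has_real_derivative z' t) (at t)"
    and ineq: "\<And>t. t \<le> T \<Longrightarrow> z' t - c * z t \<ge> \<delta> * exp (- b * t)"
    and "\<delta> > 0" and "b + c > 0" and "a + b > 0"
  shows "filterlim (\<lambda>t. exp (- a * t) * z t) at_bot at_bot"
proof -
  have "filterlim (\<lambda>s. exp (a * s) * z (- s)) at_bot at_top"
  proof (rule filterlim_exp_mult_at_bot_if_linear_DERIV_le)
    fix s assume "- T \<le> s"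
    show "((\<lambda>s. z (- s)) has_real_derivative - z' (- s)) (at s)"
      using DERIV_chain2[OF deriv[of "- s"] DERIV_minus[OF DERIV_ident]] \<open>- T \<le> s\<close>
      by simp
    show "- z' (- s) + c * z (- s) \<le> - \<delta> * exp (b * s)"
      using ineq[of "- s"] \<open>- T \<le> s\<close> by simp
  qed (use assms in auto)
  then show ?thesis
    by (simp add: filterlim_at_bot_mirror)
qed

lemma riccati_inequality_no_positive_solution_at_bot:
  fixes G G' :: "real \<Rightarrow> real" and k T :: real
  assumes deriv: "\<And>t. t \<le> T \<Longrightarrow> (G has_real_derivative G' t) (at t)"
    and pos: "\<And>t. t \<le> T \<Longrightarrow> G t > 0"
    and riccati: "\<And>t. t \<le> T \<Longrightarrow> G' t \<le> - k * (G t)\<^sup>2"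
    and "k > 0"
  shows False
proof -
  define t where "t = T - 1 / (k * G T) - 1"
  have "1 / (k * G T) > 0"
    using pos[of T] \<open>k > 0\<close> by simp
  then have "t \<le> T"
    unfolding t_def by linarith
  have "(\<lambda>s. k * s) T - (\<lambda>s. k * s) t \<le> (\<lambda>s. 1 / G s) T - (\<lambda>s. 1 / G s) t"
  proof (rule DERIV_le_imp_increment_le[OF \<open>t \<le> T\<close>])
    fix x assume "t \<le> x" "x \<le> T"
    then have "x \<le> T" by simp
    show "((\<lambda>s. k * s) has_real_derivative k) (at x)"
      by (auto intro!: derivative_eq_intros)
    show "((\<lambda>s. 1 / G s) has_real_derivative - G' x / (G x)\<^sup>2) (at x)"
      using deriv[OF \<open>x \<le> T\<close>] pos[OF \<open>x \<le> T\<close>]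
      by (auto intro!: derivative_eq_intros simp: power2_eq_square)
    show "k \<le> - G' x / (G x)\<^sup>2"
      using riccati[OF \<open>x \<le> T\<close>] pos[OF \<open>x \<le> T\<close>] by (simp add: field_simps)
  qed
  then have "1 / G t \<le> 1 / G T - k * (T - t)"
    by (simp add: algebra_simps)
  also have "\<dots> = - k"
    using pos[of T] \<open>k > 0\<close> by (simp add: t_def field_simps)
  finally have "1 / G t \<le> - k" .
  moreover have "0 < 1 / G t"
    using pos[OF \<open>t \<le> T\<close>] by simp
  ultimately show False
    using \<open>k > 0\<close> by linarith
qed

locale exp_vanishing =
  fixes z z' z'' :: "real \<Rightarrow> real"
  assumes z_deriv: "\<And>t. (z has_real_derivative z' t) (at t)"
    and z'_deriv: "\<And>t. (z' has_real_derivative z'' t) (at t)"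
    and lim_at_bot: "((\<lambda>t. exp t * z t) \<longlongrightarrow> 0) at_bot"
    and lim_at_top: "((\<lambda>t. exp t * z t) \<longlongrightarrow> 0) at_top"
begin

lemma not_filterlim_at_bot_at_top: "\<not> filterlim (\<lambda>t. exp t * z t) at_bot at_top"
  using not_tendsto_and_filterlim_at_infinity[OF _ lim_at_top filterlim_at_bot_imp_at_infinity] by auto

lemma not_filterlim_at_bot_at_bot: "\<not> filterlim (\<lambda>t. exp t * z t) at_bot at_bot"
  using not_tendsto_and_filterlim_at_infinity[OF _ lim_at_bot filterlim_at_bot_imp_at_infinity] by auto

lemma not_filterlim_at_top_at_bot: "\<not> filterlim (\<lambda>t. exp t * z t) at_top at_bot"
  using not_tendsto_and_filterlim_at_infinity[OF _ lim_at_bot filterlim_at_top_imp_at_infinity] by auto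

lemma exp2_mult_tendsto_at_bot: "((\<lambda>t. exp (2 * t) * z t) \<longlongrightarrow> 0) at_bot"
  using tendsto_mult[OF exp_at_bot lim_at_bot] by (simp add: mult.assoc[symmetric] exp_add[symmetric])

lemma tendsto_at_top: "(z \<longlongrightarrow> 0) at_top"
proof -
  have "((\<lambda>t. exp (- t) * (exp t * z t)) \<longlongrightarrow> 0 * 0) at_top"
    by (rule tendsto_mult[OF _ lim_at_top]) real_asymp
  then show ?thesis
    by (simp add: exp_minus field_simps)
qed

end

locale ode_N2 = exp_vanishing +
  assumes ode: "\<And>t. z'' t = - 2 * z' t - (z t)\<^sup>2 / 2"
begin

definition first_integral :: "real \<Rightarrow> real"
  where "first_integral t = z' t + 2 * z t"

lemma first_integral_DERIV: "(first_integral has_real_derivative - (z t)\<^sup>2 / 2) (at t)"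
  unfolding first_integral_def[abs_def]
  by (rule DERIV_cong, auto intro!: derivative_eq_intros z_deriv z'_deriv simp: ode)

lemma first_integral_antimono:
  assumes "s \<le> t"
  shows "first_integral t \<le> first_integral s"
proof (rule DERIV_nonpos_imp_nonincreasing[OF assms])
  fix x
  show "\<exists>y. (first_integral has_real_derivative y) (at x) \<and> y \<le> 0"
    using first_integral_DERIV[of x] by force
qed

lemma first_integral_nonneg: "first_integral T \<ge> 0"
proof (rule ccontr)
  assume "\<not> first_integral T \<ge> 0"
  then have "filterlim (\<lambda>t. exp (1 * t) * z t) at_bot at_top"
    by (intro filterlim_exp_mult_at_bot_if_linear_DERIV_le[where T = T and z' = z' and b = 0
          and c = 2 and \<delta> = "- first_integral T"] z_deriv)
      (use first_integral_antimono[of T] in \<open>auto simp: first_integral_def algebra_simps\<close>)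
  then show False
    using not_filterlim_at_bot_at_top by simp
qed

lemma half_first_integral_le: "first_integral t / 2 \<le> z t"
proof -
  define F where "F = first_integral t / 2"
  have increment: "exp (2 * t) * F - exp (2 * s) * F \<le> exp (2 * t) * z t - exp (2 * s) * z s"
    if "s \<le> t" for s
  proof (rule DERIV_le_imp_increment_le[OF that])
    fix x assume "s \<le> x" "x \<le> t"
    show "((\<lambda>x. exp (2 * x) * F) has_real_derivative exp (2 * x) * first_integral t) (at x)"
      by (rule DERIV_cong, auto intro!: derivative_eq_intros simp: F_def)
    show "((\<lambda>x. exp (2 * x) * z x) has_real_derivative exp (2 * x) * first_integral x) (at x)"
      by (rule DERIV_cong, auto intro!: derivative_eq_intros z_deriv simp: first_integral_def algebra_simps)
    show "exp (2 * x) * first_integral t \<le> exp (2 * x) * first_integral x"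
      using first_integral_antimono[OF \<open>x \<le> t\<close>] by simp
  qed
  have "((\<lambda>s. exp (2 * s)) \<longlongrightarrow> (0 :: real)) at_bot"
    by real_asymp
  then have lim_F: "((\<lambda>s. exp (2 * t) * F - exp (2 * s) * F) \<longlongrightarrow> exp (2 * t) * F - 0) at_bot"
    by (intro tendsto_diff tendsto_const tendsto_mult_left_zero)
  have lim_z: "((\<lambda>s. exp (2 * t) * z t - exp (2 * s) * z s) \<longlongrightarrow> exp (2 * t) * z t - 0) at_bot"
    by (intro tendsto_diff tendsto_const exp2_mult_tendsto_at_bot)
  have "exp (2 * t) * F - 0 \<le> exp (2 * t) * z t - 0"
    by (rule tendsto_le[OF trivial_limit_at_bot_linorder lim_z lim_F])
      (use increment in \<open>auto intro: eventually_at_bot_linorderI\<close>)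
  then show ?thesis
    by (simp add: F_def)
qed

lemma first_integral_nonpos: "first_integral T \<le> 0"
proof (rule ccontr)
  assume "\<not> first_integral T \<le> 0"
  then have pos: "first_integral t > 0" if "t \<le> T" for t
    using first_integral_antimono[OF that] by simp
  show False
  proof (rule riccati_inequality_no_positive_solution_at_bot[OF first_integral_DERIV pos])
    fix t assume "t \<le> T"
    have "(first_integral t / 2)\<^sup>2 \<le> (z t)\<^sup>2"
      using half_first_integral_le[of t] pos[OF \<open>t \<le> T\<close>] by (intro power_mono) auto
    then show "- (z t)\<^sup>2 / 2 \<le> - (1 / 8) * (first_integral t)\<^sup>2"
      by (simp add: power_divide)
  next
    show "(0::real) < 1 / 8" by simp
  qed
qed

lemma vanishes: "z t = 0"
proof -
  have "first_integral = (\<lambda>_. 0)"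
    using first_integral_nonneg first_integral_nonpos by (auto intro: antisym)
  then have "(first_integral has_real_derivative 0) (at t)"
    by simp
  then show ?thesis
    using DERIV_unique[OF first_integral_DERIV] by fastforce
qed

end

lemma energy_ge_imp_log_slope_rate_le:
  fixes a b e :: real
  assumes "a > 0" and "b\<^sup>2 / 2 - a\<^sup>2 + a ^ 3 / 3 \<ge> e"
  shows "2 - a - (b / a)\<^sup>2 \<le> - a / 3 - 2 * e / a\<^sup>2"
proof -
  have "(2 * e + 2 * a\<^sup>2 - 2 * a ^ 3 / 3) / a\<^sup>2 \<le> b\<^sup>2 / a\<^sup>2"
    using assms by (intro divide_right_mono) auto
  moreover have "(2 * e + 2 * a\<^sup>2 - 2 * a ^ 3 / 3) / a\<^sup>2 = 2 * e / a\<^sup>2 + 2 - 2 * a / 3"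
    using \<open>a > 0\<close> by (simp add: field_simps power2_eq_square power3_eq_cube)
  ultimately show ?thesis
    by (simp add: power_divide)
qed

lemma min_le_third_plus_inverse_square:
  fixes a e :: real
  assumes "a > 0" and "e > 0"
  shows "min 1 (2 * e / 9) \<le> a / 3 + 2 * e / a\<^sup>2"
proof (cases "a \<ge> 3")
  case True
  moreover have "2 * e / a\<^sup>2 \<ge> 0"
    using \<open>e > 0\<close> by simp
  ultimately show ?thesis
    by linarith
next
  case False
  then have "a * a \<le> 3 * 3"
    using \<open>a > 0\<close> by (intro mult_mono) auto
  then have "a\<^sup>2 \<le> 9"
    by (simp add: power2_eq_square)
  then have "2 * e / 9 \<le> 2 * e / a\<^sup>2"
    using assms by (intro divide_left_mono) auto
  then show ?thesis
    using \<open>a > 0\<close> by linarith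
qed

locale ode_N3 = exp_vanishing +
  assumes ode: "\<And>t. z'' t = - z' t + 2 * z t - (z t)\<^sup>2"
begin

lemma slope_lower: "- 2 * z t \<le> z' t"
proof -
  define G where "G t = exp (- t) * (z' t + 2 * z t)" for t
  have G_antimono: "G t \<le> G s" if "s \<le> t" for s t
  proof (rule DERIV_nonpos_imp_nonincreasing[OF that])
    fix x
    have "(G has_real_derivative - exp (- x) * (z x)\<^sup>2) (at x)"
      unfolding G_def[abs_def]
      by (rule DERIV_cong, auto intro!: derivative_eq_intros z_deriv z'_deriv simp: ode algebra_simps)
    then show "\<exists>y. (G has_real_derivative y) (at x) \<and> y \<le> 0"
      by force
  qed
  have "G t \<ge> 0"
  proof (rule ccontr)
    assume "\<not> G t \<ge> 0"
    then have "filterlim (\<lambda>s. exp (1 * s) * z s) at_bot at_top"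
    proof (intro filterlim_exp_mult_at_bot_if_linear_DERIV_le[where T = t and z' = z' and b = 1
          and c = 2 and \<delta> = "- G t"] z_deriv)
      fix s assume "t \<le> s"
      have "exp (- s) * (z' s + 2 * z s) \<le> G t"
        using G_antimono[OF \<open>t \<le> s\<close>] by (simp add: G_def)
      then show "z' s + 2 * z s \<le> - (- G t) * exp (1 * s)"
        by (simp add: exp_minus field_simps)
    qed auto
    then show False
      using not_filterlim_at_bot_at_top by simp
  qed
  then show ?thesis
    by (simp add: G_def zero_le_mult_iff)
qed

lemma slope_upper: "z' t \<le> z t"
proof -
  define F where "F t = exp (2 * t) * (z' t - z t)" for t
  have F_antimono: "F t \<le> F s" if "s \<le> t" for s t
  proof (rule DERIV_nonpos_imp_nonincreasing[OF that])
    fix x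
    have "(F has_real_derivative - exp (2 * x) * (z x)\<^sup>2) (at x)"
      unfolding F_def[abs_def]
      by (rule DERIV_cong, auto intro!: derivative_eq_intros z_deriv z'_deriv simp: ode algebra_simps)
    then show "\<exists>y. (F has_real_derivative y) (at x) \<and> y \<le> 0"
      by force
  qed
  have "F t \<le> 0"
  proof (rule ccontr)
    assume "\<not> F t \<le> 0"
    then have "filterlim (\<lambda>s. exp (- (- 1) * s) * z s) at_bot at_bot"
    proof (intro filterlim_exp_mult_at_bot_at_bot_if_linear_DERIV_ge[where T = t and z' = z' and b = 2
          and c = 1 and \<delta> = "F t"] z_deriv)
      fix s assume "s \<le> t"
      have "F t \<le> exp (2 * s) * (z' s - z s)"
        using F_antimono[OF \<open>s \<le> t\<close>] by (simp add: F_def)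
      then show "F t * exp (- 2 * s) \<le> z' s - 1 * z s"
        by (simp add: exp_minus field_simps)
    qed auto
    then show False
      using not_filterlim_at_bot_at_bot by simp
  qed
  then show ?thesis
    by (simp add: F_def mult_le_0_iff)
qed

lemma nonneg: "0 \<le> z t"
  using slope_lower[of t] slope_upper[of t] by simp

definition energy :: "real \<Rightarrow> real"
  where "energy t = (z' t)\<^sup>2 / 2 - (z t)\<^sup>2 + (z t) ^ 3 / 3"

lemma energy_DERIV: "(energy has_real_derivative - (z' t)\<^sup>2) (at t)"
  unfolding energy_def[abs_def]
  by (rule DERIV_cong, auto intro!: derivative_eq_intros z_deriv z'_deriv
      simp: ode field_simps power2_eq_square power3_eq_cube)

lemma energy_antimono:
  assumes "s \<le> t"
  shows "energy t \<le> energy s"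
proof (rule DERIV_nonpos_imp_nonincreasing[OF assms])
  fix x
  show "\<exists>y. (energy has_real_derivative y) (at x) \<and> y \<le> 0"
    using energy_DERIV[of x] by force
qed

lemma energy_nonneg: "0 \<le> energy t"
proof -
  have "(z' \<longlongrightarrow> 0) at_top"
  proof (rule tendsto_sandwich[of "\<lambda>t. - 2 * z t" _ _ z])
    show "((\<lambda>t. - 2 * z t) \<longlongrightarrow> 0) at_top"
      using tendsto_mult_right_zero[OF tendsto_at_top, of "- 2"] by simp
  qed (use slope_lower slope_upper tendsto_at_top in auto)
  then have "(energy \<longlongrightarrow> 0\<^sup>2 / 2 - 0\<^sup>2 + 0 ^ 3 / 3) at_top"
    unfolding energy_def[abs_def] by (intro tendsto_intros tendsto_at_top) auto
  then have "(energy \<longlongrightarrow> 0) at_top"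
    by simp
  then show ?thesis
    by (rule tendsto_upperbound) (auto intro: eventually_at_top_linorderI energy_antimono)
qed

lemma pos_if_energy_pos:
  assumes "0 < energy t0" and "t \<le> t0"
  shows "0 < z t"
proof -
  have "0 < energy t"
    using energy_antimono[OF \<open>t \<le> t0\<close>] \<open>0 < energy t0\<close> by simp
  then show ?thesis
    using nonneg[of t] slope_lower[of t] slope_upper[of t] by (cases "z t = 0") (auto simp: energy_def)
qed

definition log_slope :: "real \<Rightarrow> real"
  where "log_slope t = ln (z t) + z' t / z t"

lemma log_slope_DERIV:
  assumes "0 < z t"
  shows "(log_slope has_real_derivative 2 - z t - (z' t / z t)\<^sup>2) (at t)"
  unfolding log_slope_def[abs_def]
  by (rule DERIV_cong, use assms in \<open>auto intro!: derivative_eq_intros z_deriv z'_deriv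
      simp: ode field_simps power2_eq_square\<close>)

lemma log_slope_le_ln: "0 < z t \<Longrightarrow> log_slope t - 1 \<le> ln (z t)"
  using slope_upper[of t] by (simp add: log_slope_def)

lemma log_slope_increment_ge:
  assumes "0 < energy t0" and "s \<le> t" and "t \<le> t0"
    and rate: "\<And>x. s \<le> x \<Longrightarrow> x \<le> t \<Longrightarrow> m \<le> z x / 3 + 2 * energy t0 / (z x)\<^sup>2"
  shows "log_slope t + m * (t - s) \<le> log_slope s"
proof -
  have "log_slope t - log_slope s \<le> (- m * t) - (- m * s)"
  proof (rule DERIV_le_imp_increment_le[OF \<open>s \<le> t\<close>])
    fix x assume "s \<le> x" "x \<le> t"
    then have energy_ge: "energy t0 \<le> energy x"
      using energy_antimono \<open>t \<le> t0\<close> by simp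
    have "0 < z x"
      using pos_if_energy_pos \<open>0 < energy t0\<close> \<open>x \<le> t\<close> \<open>t \<le> t0\<close> by simp
    then show "(log_slope has_real_derivative 2 - z x - (z' x / z x)\<^sup>2) (at x)"
      by (rule log_slope_DERIV)
    show "((\<lambda>x. - m * x) has_real_derivative - m) (at x)"
      by (auto intro!: derivative_eq_intros)
    have "2 - z x - (z' x / z x)\<^sup>2 \<le> - z x / 3 - 2 * energy t0 / (z x)\<^sup>2"
      by (rule energy_ge_imp_log_slope_rate_le[OF \<open>0 < z x\<close>]) (use energy_ge in \<open>simp add: energy_def\<close>)
    then show "2 - z x - (z' x / z x)\<^sup>2 \<le> - m"
      using rate[OF \<open>s \<le> x\<close> \<open>x \<le> t\<close>] by simp
  qed
  then show ?thesis
    by (simp add: algebra_simps)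
qed

lemma large_on_left_half_line:
  assumes "0 < energy t0"
  obtains t2 where "t2 \<le> t0" and "\<And>t. t \<le> t2 \<Longrightarrow> 6 \<le> z t"
proof
  define m where "m = min 1 (2 * energy t0 / 9)"
  have "0 < m"
    using assms by (simp add: m_def)
  define t2 where "t2 = t0 - (ln 6 + 1 + \<bar>log_slope t0\<bar>) / m"
  have "0 \<le> (ln 6 + 1 + \<bar>log_slope t0\<bar>) / m"
    using \<open>0 < m\<close> by simp
  then show "t2 \<le> t0"
    unfolding t2_def by linarith
  fix t assume "t \<le> t2"
  then have "t \<le> t0"
    using \<open>t2 \<le> t0\<close> by simp
  have pos: "0 < z t"
    by (rule pos_if_energy_pos[OF assms \<open>t \<le> t0\<close>])
  have "log_slope t0 + m * (t0 - t) \<le> log_slope t"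
  proof (rule log_slope_increment_ge[OF assms \<open>t \<le> t0\<close> order_refl])
    fix x assume "t \<le> x" "x \<le> t0"
    then have "0 < z x"
      using pos_if_energy_pos[OF assms] by simp
    then show "m \<le> z x / 3 + 2 * energy t0 / (z x)\<^sup>2"
      unfolding m_def using min_le_third_plus_inverse_square assms by simp
  qed
  moreover have "m * (t0 - t2) \<le> m * (t0 - t)"
    using \<open>t \<le> t2\<close> \<open>0 < m\<close> by simp
  moreover have "m * (t0 - t2) = ln 6 + 1 + \<bar>log_slope t0\<bar>"
    using \<open>0 < m\<close> by (simp add: t2_def)
  ultimately have "ln 6 \<le> ln (z t)"
    using log_slope_le_ln[OF pos] by linarith
  then show "6 \<le> z t"
    using pos by simp
qed

lemma energy_eq_zero: "energy t0 = 0"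
proof (rule ccontr)
  assume "energy t0 \<noteq> 0"
  then have "0 < energy t0"
    using energy_nonneg[of t0] by simp
  then obtain t2 where "t2 \<le> t0" and large: "\<And>t. t \<le> t2 \<Longrightarrow> 6 \<le> z t"
    using large_on_left_half_line[OF \<open>0 < energy t0\<close>] by blast
  define C where "C = log_slope t2 + 2 * t2 - 1"
  have bound: "exp (C - t) \<le> exp t * z t" if "t \<le> t2" for t
  proof -
    have pos: "0 < z t"
      using pos_if_energy_pos[OF \<open>0 < energy t0\<close>] that \<open>t2 \<le> t0\<close> by simp
    have "log_slope t2 + 2 * (t2 - t) \<le> log_slope t"
    proof (rule log_slope_increment_ge[OF \<open>0 < energy t0\<close> that \<open>t2 \<le> t0\<close>])
      fix x assume "t \<le> x" "x \<le> t2"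
      moreover have "0 \<le> 2 * energy t0 / (z x)\<^sup>2"
        using \<open>0 < energy t0\<close> by simp
      ultimately show "2 \<le> z x / 3 + 2 * energy t0 / (z x)\<^sup>2"
        using large[of x] by simp
    qed
    then have "C - t \<le> t + ln (z t)"
      using log_slope_le_ln[OF pos] by (simp add: C_def)
    then have "exp (C - t) \<le> exp (t + ln (z t))"
      by simp
    also have "\<dots> = exp t * z t"
      using pos by (simp add: exp_add)
    finally show ?thesis .
  qed
  have "filterlim (\<lambda>t. exp (C - t)) at_top at_bot"
    by real_asymp
  moreover have "eventually (\<lambda>t. exp (C - t) \<le> exp t * z t) at_bot"
    using bound by (auto simp: eventually_at_bot_linorder)
  ultimately have "filterlim (\<lambda>t. exp t * z t) at_top at_bot"
    by (rule filterlim_at_top_mono)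
  then show False
    using not_filterlim_at_top_at_bot by simp
qed

lemma vanishes: "z t = 0"
proof -
  have "energy = (\<lambda>_. 0)"
    using energy_eq_zero by auto
  then have "(energy has_real_derivative 0) (at s)" for s
    by simp
  then have "z' s = 0" for s
    using DERIV_unique[OF energy_DERIV] by fastforce
  define c where "c = z t"
  have "z = (\<lambda>_. c)"
    using DERIV_isconst_all[of z _ t] z_deriv \<open>\<And>s. z' s = 0\<close> by (auto simp: c_def)
  then have "((\<lambda>_ :: real. c) \<longlongrightarrow> 0) at_top"
    using tendsto_at_top by simp
  then show ?thesis
    by (simp add: c_def tendsto_const_iff)
qed

end

theorem theorem3p7:
  fixes N :: nat and z z' z'' :: "real \<Rightarrow> real"
  assumes N: "N \<in> {2, 3}"
    and d1: "\<And>t. (z has_real_derivative z' t) (at t)"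
    and d2: "\<And>t. (z' has_real_derivative z'' t) (at t)"
    and c2: "continuous_on UNIV z''"
    and ode: "\<And>t. - z'' t + (real N - 4) * z' t + (2 * real N - 4) * z t
                 = (real N - 1) / 2 * (z t)\<^sup>2"
    and lim_minus: "((\<lambda>t. exp t * z t) \<longlongrightarrow> 0) at_bot"
    and lim_plus: "((\<lambda>t. exp t * z t) \<longlongrightarrow> 0) at_top"
  shows "\<forall>t. z t = 0"
proof
  fix t
  interpret exp_vanishing z z' z''
    using d1 d2 lim_minus lim_plus by unfold_locales
  consider "N = 2" | "N = 3"
    using N by auto
  then show "z t = 0"
  proof cases
    case 1
    have "z'' s = - 2 * z' s - (z s)\<^sup>2 / 2" for s
      using ode[of s] 1 by simp
    then interpret ode_N2 z z' z''
      by unfold_locales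
    show ?thesis
      by (rule vanishes)
  next
    case 2
    interpret ode_N3 z z' z''
      by unfold_locales (use ode 2 in \<open>simp add: algebra_simps\<close>)
    show ?thesis
      by (rule vanishes)
  qed
qed

end
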